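(* Let $k\ge 2$ and let $G=(V,E,w)$ be a $k$-colorable graph with positive vertex weights that is a $(k-1)$-stable instance of \texttt{MIS}. Then every optimal solution $x$ of the standard LP relaxation of \texttt{MIS} for $G$ that is half-integral ($x_u\in\{0,\tfrac12,1\}$ for all $u$) is integral, i.e. $x_u\in\{0,1\}$ for all $u\in V$ (and hence is the indicator vector of the maximum weight independent set).
   Context: \texttt{MIS}: given a graph $G=(V,E)$ with weights $w:V\to\mathbb{R}_{>0}$, find an independent set maximizing $w(I)=\sum_{u\in I}w_u$. The standard LP relaxation: maximize $\sum_{u\in V}w_ux_u$ subject to $x_u+x_v\le1$ for $(u,v)\in E$, $x_u\in[0,1]$ for $u\in V$ (it is known to always have a half-integral optimal solution). For $\gamma\ge1$, a $\gamma$-perturbation of $w$ is any $w':V\to\mathbb{R}$ with $w_u\le w'_u\le\gamma w_u$ for all $u$. The instance $G=(V,E,w)$ is $\gamma$-stable if it has a unique maximum weight independent set $I^*$ and $I^*$ remains the unique maximum weight independent set of $(V,E,w')$ for every $\gamma$-perturbation $w'$ of $w$. *)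

theory Defs
  imports Complex_Main
begin

text \<open>A graph is given by a finite vertex set V and an edge set E of (ordered) pairs
  of vertices; edge (u,v) imposes the same constraint as (v,u).\<close>

definition graph :: "'a set \<Rightarrow> ('a \<times> 'a) set \<Rightarrow> bool" where
  "graph V E \<longleftrightarrow> finite V \<and> E \<subseteq> V \<times> V \<and> (\<forall>(u,v)\<in>E. u \<noteq> v)"

definition independent :: "'a set \<Rightarrow> ('a \<times> 'a) set \<Rightarrow> 'a set \<Rightarrow> bool" where
  "independent V E I \<longleftrightarrow> I \<subseteq> V \<and> (\<forall>(u,v)\<in>E. \<not> (u \<in> I \<and> v \<in> I))"

definition max_weight_is :: "'a set \<Rightarrow> ('a \<times> 'a) set \<Rightarrow> ('a \<Rightarrow> real) \<Rightarrow> 'a set \<Rightarrow> bool" where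
  "max_weight_is V E w I \<longleftrightarrow> independent V E I \<and>
     (\<forall>J. independent V E J \<longrightarrow> sum w J \<le> sum w I)"

definition unique_max_is :: "'a set \<Rightarrow> ('a \<times> 'a) set \<Rightarrow> ('a \<Rightarrow> real) \<Rightarrow> 'a set \<Rightarrow> bool" where
  "unique_max_is V E w I \<longleftrightarrow> max_weight_is V E w I \<and>
     (\<forall>J. max_weight_is V E w J \<longrightarrow> J = I)"

definition perturbation :: "'a set \<Rightarrow> real \<Rightarrow> ('a \<Rightarrow> real) \<Rightarrow> ('a \<Rightarrow> real) \<Rightarrow> bool" where
  "perturbation V \<gamma> w w' \<longleftrightarrow> (\<forall>u\<in>V. w u \<le> w' u \<and> w' u \<le> \<gamma> * w u)"

definition stable :: "'a set \<Rightarrow> ('a \<times> 'a) set \<Rightarrow> ('a \<Rightarrow> real) \<Rightarrow> real \<Rightarrow> bool" where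
  "stable V E w \<gamma> \<longleftrightarrow> (\<exists>I. unique_max_is V E w I \<and>
     (\<forall>w'. perturbation V \<gamma> w w' \<longrightarrow> unique_max_is V E w' I))"

definition colorable :: "'a set \<Rightarrow> ('a \<times> 'a) set \<Rightarrow> nat \<Rightarrow> bool" where
  "colorable V E k \<longleftrightarrow> (\<exists>c :: 'a \<Rightarrow> nat. (\<forall>u\<in>V. c u < k) \<and> (\<forall>(u,v)\<in>E. c u \<noteq> c v))"

definition lp_feasible :: "'a set \<Rightarrow> ('a \<times> 'a) set \<Rightarrow> ('a \<Rightarrow> real) \<Rightarrow> bool" where
  "lp_feasible V E x \<longleftrightarrow> (\<forall>u\<in>V. 0 \<le> x u \<and> x u \<le> 1) \<and> (\<forall>(u,v)\<in>E. x u + x v \<le> 1)"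

definition lp_optimal :: "'a set \<Rightarrow> ('a \<times> 'a) set \<Rightarrow> ('a \<Rightarrow> real) \<Rightarrow> ('a \<Rightarrow> real) \<Rightarrow> bool" where
  "lp_optimal V E w x \<longleftrightarrow> lp_feasible V E x \<and>
     (\<forall>y. lp_feasible V E y \<longrightarrow> (\<Sum>u\<in>V. w u * y u) \<le> (\<Sum>u\<in>V. w u * x u))"

end

theory Submission
  imports Defs
begin

text \<open>Let \<open>x\<close> be half-integral and optimal, with \<open>V\<^sub>1 = {x = 1}\<close> and \<open>H = {x = 1/2}\<close>.
  For every colour class \<open>C\<^sub>i\<close> of \<open>H\<close>, the set \<open>V\<^sub>1 \<union> C\<^sub>i\<close> is independent, so its weight is
  at most the LP value \<open>w(V\<^sub>1) + w(H)/2\<close>. Perturb \<open>w\<close> by multiplying the weights outside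
  the stable optimum \<open>I\<close> by \<open>k - 1\<close>. Stability makes every \<open>V\<^sub>1 \<union> C\<^sub>i\<close> lose against \<open>I\<close> in the
  perturbed weight, strictly for some \<open>i\<close> if \<open>H \<noteq> {}\<close>. Summing over the \<open>k\<close> colours and using
  the LP bounds for \<open>I\<close> and \<open>V\<^sub>1 \<union> (H \<inter> I)\<close> shows the opposite inequality, so \<open>H = {}\<close>.\<close>

lemma lp_feasible_indicator:
  assumes "independent V E J"
  shows "lp_feasible V E (\<lambda>u. if u \<in> J then 1 else 0)"
  using assms unfolding lp_feasible_def independent_def by auto

lemma lp_optimal_ge_independent:
  assumes "finite V" and "lp_optimal V E w x" and J: "independent V E J"
  shows "sum w J \<le> (\<Sum>u\<in>V. w u * x u)"
proof -
  have "J \<subseteq> V" using J unfolding independent_def by simp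
  then have "sum w J = (\<Sum>u\<in>V. w u * (if u \<in> J then 1 else 0))"
    using \<open>finite V\<close> by (simp add: if_distrib sum.If_cases Int_absorb1)
  also have "\<dots> \<le> (\<Sum>u\<in>V. w u * x u)"
    using assms(2) lp_feasible_indicator[OF J] unfolding lp_optimal_def by blast
  finally show ?thesis .
qed

lemma objective_half_integral:
  fixes w x :: "'a \<Rightarrow> real"
  assumes "finite V" and "\<forall>u\<in>V. x u \<in> {0, 1/2, 1}"
  shows "(\<Sum>u\<in>V. w u * x u) = sum w {u\<in>V. x u = 1} + sum w {u\<in>V. x u = 1/2} / 2"
proof -
  have "(\<Sum>u\<in>V. w u * x u)
      = (\<Sum>u\<in>V. (if x u = 1 then w u else 0) + (if x u = 1/2 then w u else 0) / 2)"
    by (rule sum.cong) (use assms(2) in auto)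
  then show ?thesis
    using assms(1) by (simp add: sum.distrib sum_divide_distrib sum.inter_filter)
qed

lemma independent_weight_le_half_integral_lp:
  assumes "finite V" and "lp_optimal V E w x" and "\<forall>u\<in>V. x u \<in> {0, 1/2, 1}"
    and "independent V E J"
  shows "sum w J \<le> sum w {u\<in>V. x u = 1} + sum w {u\<in>V. x u = 1/2} / 2"
  using lp_optimal_ge_independent[OF assms(1,2,4)] objective_half_integral[OF assms(1,3)] by simp

text \<open>Feasibility forces the neighbours of \<open>{x = 1}\<close> to have \<open>x = 0\<close>.\<close>

lemma independent_ones_union_halves:
  assumes "lp_feasible V E x" and "S \<subseteq> {u\<in>V. x u = 1/2}"
    and "\<forall>(u, v)\<in>E. \<not> (u \<in> S \<and> v \<in> S)"
  shows "independent V E ({u\<in>V. x u = 1} \<union> S)"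
  using assms unfolding independent_def lp_feasible_def by fastforce

definition scale_outside :: "'a set \<Rightarrow> real \<Rightarrow> ('a \<Rightarrow> real) \<Rightarrow> 'a \<Rightarrow> real" where
  "scale_outside I \<gamma> w u = (if u \<in> I then w u else \<gamma> * w u)"

lemma perturbation_scale_outside:
  assumes "\<gamma> \<ge> 1" and "\<forall>u\<in>V. w u \<ge> 0"
  shows "perturbation V \<gamma> w (scale_outside I \<gamma> w)"
  using assms unfolding perturbation_def scale_outside_def
  by (auto simp: mult_le_cancel_right1 mult_left_le_one_le)

lemma sum_scale_outside:
  assumes "finite S"
  shows "sum (scale_outside I \<gamma> w) S = \<gamma> * sum w S - (\<gamma> - 1) * sum w (S \<inter> I)"
proof -
  have "sum (scale_outside I \<gamma> w) S = sum w (S \<inter> I) + \<gamma> * sum w (S - I)"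
    using assms
    by (simp add: sum.Int_Diff[of S _ I] scale_outside_def sum_distrib_left)
  moreover have "sum w S = sum w (S \<inter> I) + sum w (S - I)"
    using assms by (rule sum.Int_Diff)
  ultimately show ?thesis by (simp add: algebra_simps)
qed

lemma unique_max_is_strict:
  assumes "unique_max_is V E w I" and "independent V E J" and "J \<noteq> I"
  shows "sum w J < sum w I"
proof -
  have "\<not> max_weight_is V E w J" using assms(1,3) unfolding unique_max_is_def by blast
  then obtain J' where "independent V E J'" and "sum w J < sum w J'"
    using assms(2) unfolding max_weight_is_def by (auto simp: not_le)
  moreover have "sum w J' \<le> sum w I"
    using assms(1) calculation(1) unfolding unique_max_is_def max_weight_is_def by blast
  ultimately show ?thesis by linarith
qed

lemma sum_union_colour_classes:
  fixes f :: "'a \<Rightarrow> 'b::comm_semiring_1"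
  assumes "finite A" and "finite B" and "A \<inter> B = {}" and "\<forall>u\<in>B. c u < k"
  shows "(\<Sum>i<k. sum f (A \<union> {u\<in>B. c u = i})) = of_nat k * sum f A + sum f B"
proof -
  have "(\<Sum>i<k. sum f (A \<union> {u\<in>B. c u = i})) = (\<Sum>i<k. sum f A + sum f {u\<in>B. c u = i})"
    using assms(1-3) by (intro sum.cong refl sum.union_disjoint) auto
  also have "(\<Sum>i<k. sum f {u\<in>B. c u = i}) = sum f B"
    using assms(2,4) by (intro sum.group) auto
  ultimately show ?thesis by (simp add: sum.distrib)
qed

lemma exists_colour_class_union_ne:
  fixes c :: "'a \<Rightarrow> nat"
  assumes "h \<in> B" and "h \<notin> A" and "c h < k" and "k \<ge> 2"
  shows "\<exists>i<k. A \<union> {u\<in>B. c u = i} \<noteq> I"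
proof -
  define j :: nat where "j = (if c h = 0 then 1 else 0)"
  have "j < k" "j \<noteq> c h" using assms(4) unfolding j_def by auto
  then have "A \<union> {u\<in>B. c u = c h} \<noteq> A \<union> {u\<in>B. c u = j}"
    using assms(1,2) by blast
  then show ?thesis using \<open>j < k\<close> assms(3) by blast
qed

text \<open>The scaling factor \<open>k - 1\<close> is exactly what cancels the contribution of \<open>H\<close> below.\<close>

lemma colour_rounding_average_ge:
  fixes V :: "'a set" and I :: "'a set" and k :: nat and w x :: "'a \<Rightarrow> real" and c :: "'a \<Rightarrow> nat"
  defines "V\<^sub>1 \<equiv> {u\<in>V. x u = 1}" and "H \<equiv> {u\<in>V. x u = 1/2}"
    and "w' \<equiv> scale_outside I (real k - 1) w"
  assumes "finite V" and k: "k \<ge> 2" and w_nonneg: "\<forall>u\<in>V. w u \<ge> 0"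
    and colour: "\<forall>u\<in>V. c u < k" and feasible: "lp_feasible V E x"
    and lp_bound: "\<And>J. independent V E J \<Longrightarrow> sum w J \<le> sum w V\<^sub>1 + sum w H / 2"
    and I: "independent V E I"
  shows "real k * sum w' I \<le> (\<Sum>i<k. sum w' (V\<^sub>1 \<union> {u\<in>H. c u = i}))"
proof -
  have fin: "finite V\<^sub>1" "finite H" "finite I" "finite (H \<inter> I)"
    using \<open>finite V\<close> I finite_subset unfolding V\<^sub>1_def H_def independent_def by auto
  have disj: "V\<^sub>1 \<inter> H = {}" unfolding V\<^sub>1_def H_def by auto
  have "independent V E (V\<^sub>1 \<union> (H \<inter> I))"
    using I unfolding V\<^sub>1_def H_def
    by (intro independent_ones_union_halves[OF feasible]) (auto simp: independent_def)
  then have "sum w V\<^sub>1 + sum w (H \<inter> I) \<le> sum w V\<^sub>1 + sum w H / 2"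
    using lp_bound fin disj by (metis Int_assoc inf_bot_left sum.union_disjoint)
  then have "(real k - 2) * sum w (H \<inter> I) \<le> (real k - 2) * (sum w H / 2)"
    using k by (intro mult_left_mono) auto
  moreover have "real k * (real k - 2) * sum w (V\<^sub>1 \<inter> I) \<le> real k * (real k - 2) * sum w V\<^sub>1"
    using k w_nonneg fin unfolding V\<^sub>1_def by (intro mult_left_mono sum_mono2) auto
  moreover have "real k * sum w I \<le> real k * (sum w V\<^sub>1 + sum w H / 2)"
    using lp_bound[OF I] by (simp add: mult_left_mono)
  moreover have "(\<Sum>i<k. sum w' (V\<^sub>1 \<union> {u\<in>H. c u = i})) = real k * sum w' V\<^sub>1 + sum w' H"
    using fin disj colour unfolding H_def by (intro sum_union_colour_classes) auto
  ultimately show ?thesis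
    unfolding w'_def using fin by (simp add: sum_scale_outside Int_absorb algebra_simps)
qed

theorem mainTheorem2:
  fixes V :: "'a set" and E :: "('a \<times> 'a) set" and w :: "'a \<Rightarrow> real"
    and k :: nat and x :: "'a \<Rightarrow> real"
  assumes "k \<ge> 2"
    and "graph V E"
    and "\<forall>u\<in>V. w u > 0"
    and "colorable V E k"
    and "stable V E w (real k - 1)"
    and "lp_optimal V E w x"
    and "\<forall>u\<in>V. x u \<in> {0, 1/2, 1}"
  shows "\<forall>u\<in>V. x u \<in> {0, 1}"
proof (rule ccontr)
  assume "\<not> ?thesis"
  then obtain h where h: "h \<in> V" "x h = 1/2" using assms(7) by auto
  have "finite V" using assms(2) unfolding graph_def by simp
  obtain I where I: "unique_max_is V E w I"
    and stable_I: "\<forall>w'. perturbation V (real k - 1) w w' \<longrightarrow> unique_max_is V E w' I"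
    using assms(5) unfolding stable_def by blast
  obtain c :: "'a \<Rightarrow> nat" where colour: "\<forall>u\<in>V. c u < k" "\<forall>(u, v)\<in>E. c u \<noteq> c v"
    using assms(4) unfolding colorable_def by blast
  define w' where "w' = scale_outside I (real k - 1) w"
  define J where "J i = {u\<in>V. x u = 1} \<union> {u\<in>{u\<in>V. x u = 1/2}. c u = i}" for i
  have feasible: "lp_feasible V E x" using assms(6) unfolding lp_optimal_def by simp
  have w_nonneg: "\<forall>u\<in>V. w u \<ge> 0" using assms(3) by (simp add: less_imp_le)
  have I_indep: "independent V E I" using I unfolding unique_max_is_def max_weight_is_def by simp
  have "perturbation V (real k - 1) w w'"
    unfolding w'_def using assms(1) w_nonneg by (intro perturbation_scale_outside) auto
  then have w'_I: "unique_max_is V E w' I" using stable_I by blast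
  have J_indep: "independent V E (J i)" for i
    unfolding J_def using colour(2) by (intro independent_ones_union_halves[OF feasible]) auto
  have "sum w' (J i) \<le> sum w' I" for i
    using unique_max_is_strict[OF w'_I J_indep] by (cases "J i = I") (auto intro: less_imp_le)
  moreover obtain i where "i < k" "J i \<noteq> I"
    using exists_colour_class_union_ne[of h _ "{u\<in>V. x u = 1}" c k I] h colour(1) assms(1)
    unfolding J_def by auto
  ultimately have "(\<Sum>i<k. sum w' (J i)) < (\<Sum>i<k. sum w' I)"
    using unique_max_is_strict[OF w'_I J_indep] by (intro sum_strict_mono_ex1) auto
  moreover have "real k * sum w' I \<le> (\<Sum>i<k. sum w' (J i))"
    unfolding J_def w'_def
    using colour_rounding_average_ge[OF \<open>finite V\<close> assms(1) w_nonneg colour(1) feasible _ I_indep]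
      independent_weight_le_half_integral_lp[OF \<open>finite V\<close> assms(6,7)] by blast
  ultimately show False by (simp only: sum_constant card_lessThan)
qed

end
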